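(* Assume the bipartite graph $\mathcal{T}$ is a tree of diameter $3$. There is a constant $m_5$ with the following property. Fix $T>0$ and let measurable locally bounded $(\psi,y,z,w)$ on $[0,T]$ satisfy $$\text{(S1)}\ \sum_{j\in\mathcal{J}}(\psi_{ij}+\mu_{ij}\mathfrak{J}\psi_{ij})=w_i-y_i-\theta_i\mathfrak{J}y_i,\ i\in\mathcal{I};\quad \text{(S2)}\ \sum_{i\in\mathcal{I}}\psi_{ij}=-z_j,\ j\in\mathcal{J};\quad \text{(S3)}\ y_i,z_j\ge0;\quad \text{(S4)}\ \min(e\cdot y,e\cdot z)=0$$ on $[0,T]$ (with $\psi_{ij}=0$ for $i\not\sim j$). Let bounded measurable functions $f_i\ge0$, $i\in\mathcal{I}$, be given. Then there exist $(\hat\psi,\hat y,\hat z,\hat w)$ defined on $[0,T]$ satisfying (S1)–(S4) on $[0,T]$, such that $e\cdot\hat y\ge e\cdot y$, $e\cdot\hat z\le e\cdot z$, and $\hat w_i=w_i+f_i+\eta_i$ for $i\in\mathcal{I}$, where each $\eta_i$ is nondecreasing and continuous with $0\le\eta_i\le m_5T\sum_{i'\in\mathcal{I}}|f_{i'}|_T^*$ on $[0,T]$. The constant $m_5$ does not depend on $T$, $f_i$, $\psi,y,z,w$.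
   Context: $\mathcal{I}=\{1,\dots,I\}$, $\mathcal{J}=\{I+1,\dots,I+J\}$, $\mathcal{E}\subset\mathcal{I}\times\mathcal{J}$, $i\sim j$ iff $(i,j)\in\mathcal{E}$; $\mathcal{T}$ is the bipartite graph with vertices $\mathcal{I}\cup\mathcal{J}$ and edges $\mathcal{E}$. Constants $\mu_{ij}>0$ for $(i,j)\in\mathcal{E}$, $\mu_{ij}=0$ otherwise, $\theta_i\ge0$. $\mathfrak{J}f(t)=\int_0^tf(s)ds$, $|f|_T^*=\sup_{0\le s\le T}|f(s)|$, $e=(1,\dots,1)'$. *)

theory Defs
  imports "HOL-Analysis.Analysis"
begin

definition adj :: "(nat \<times> nat) set \<Rightarrow> nat \<Rightarrow> nat \<Rightarrow> bool" where
  "adj E u v \<longleftrightarrow> (u, v) \<in> E \<or> (v, u) \<in> E"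

definition walk :: "(nat \<times> nat) set \<Rightarrow> nat list \<Rightarrow> bool" where
  "walk E xs \<longleftrightarrow> xs \<noteq> [] \<and> (\<forall>k. Suc k < length xs \<longrightarrow> adj E (xs ! k) (xs ! Suc k))"

definition graph_connected :: "nat set \<Rightarrow> (nat \<times> nat) set \<Rightarrow> bool" where
  "graph_connected V E \<longleftrightarrow>
     (\<forall>u\<in>V. \<forall>v\<in>V. \<exists>xs. walk E xs \<and> hd xs = u \<and> last xs = v)"

definition has_cycle :: "(nat \<times> nat) set \<Rightarrow> bool" where
  "has_cycle E \<longleftrightarrow>
     (\<exists>xs. 3 \<le> length xs \<and> distinct xs \<and> walk E xs \<and> adj E (last xs) (hd xs))"

definition is_tree :: "nat set \<Rightarrow> (nat \<times> nat) set \<Rightarrow> bool" where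
  "is_tree V E \<longleftrightarrow> finite V \<and> V \<noteq> {} \<and> E \<subseteq> V \<times> V \<and>
     graph_connected V E \<and> \<not> has_cycle E"

definition graph_dist :: "(nat \<times> nat) set \<Rightarrow> nat \<Rightarrow> nat \<Rightarrow> nat" where
  "graph_dist E u v =
     (LEAST n. \<exists>xs. walk E xs \<and> hd xs = u \<and> last xs = v \<and> length xs = Suc n)"

definition diameter :: "nat set \<Rightarrow> (nat \<times> nat) set \<Rightarrow> nat" where
  "diameter V E = Max {graph_dist E u v | u v. u \<in> V \<and> v \<in> V}"

abbreviation Iset :: "nat \<Rightarrow> nat set" where "Iset nI \<equiv> {1..nI}"
abbreviation Jset :: "nat \<Rightarrow> nat \<Rightarrow> nat set" where "Jset nI nJ \<equiv> {nI+1..nI+nJ}"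

definition regular_on :: "real \<Rightarrow> (real \<Rightarrow> real) \<Rightarrow> bool" where
  "regular_on T f \<longleftrightarrow> f \<in> borel_measurable (restrict_space lborel {0..T}) \<and> bounded (f ` {0..T})"

definition Jint :: "(real \<Rightarrow> real) \<Rightarrow> real \<Rightarrow> real" where
  "Jint f t = integral {0..t} f"

definition sup_norm :: "real \<Rightarrow> (real \<Rightarrow> real) \<Rightarrow> real" where
  "sup_norm T f = Sup ((\<lambda>s. \<bar>f s\<bar>) ` {0..T})"

definition admissible ::
  "nat \<Rightarrow> nat \<Rightarrow> (nat \<times> nat) set \<Rightarrow> (nat \<Rightarrow> nat \<Rightarrow> real) \<Rightarrow> (nat \<Rightarrow> real) \<Rightarrow> real \<Rightarrow>
   (nat \<Rightarrow> nat \<Rightarrow> real \<Rightarrow> real) \<Rightarrow> (nat \<Rightarrow> real \<Rightarrow> real) \<Rightarrow> (nat \<Rightarrow> real \<Rightarrow> real) \<Rightarrow>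
   (nat \<Rightarrow> real \<Rightarrow> real) \<Rightarrow> bool" where
  "admissible nI nJ E \<mu> \<theta> T \<psi> y z w \<longleftrightarrow>
     (\<forall>i\<in>Iset nI. \<forall>j\<in>Jset nI nJ. regular_on T (\<psi> i j)) \<and>
     (\<forall>i\<in>Iset nI. regular_on T (y i) \<and> regular_on T (w i)) \<and>
     (\<forall>j\<in>Jset nI nJ. regular_on T (z j)) \<and>
     (\<forall>t\<in>{0..T}.
        (\<forall>i\<in>Iset nI. \<forall>j\<in>Jset nI nJ. (i, j) \<notin> E \<longrightarrow> \<psi> i j t = 0) \<and>
        (\<forall>i\<in>Iset nI. (\<Sum>j\<in>Jset nI nJ. \<psi> i j t + \<mu> i j * Jint (\<psi> i j) t)
                        = w i t - y i t - \<theta> i * Jint (y i) t) \<and>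
        (\<forall>j\<in>Jset nI nJ. (\<Sum>i\<in>Iset nI. \<psi> i j t) = - z j t) \<and>
        (\<forall>i\<in>Iset nI. 0 \<le> y i t) \<and> (\<forall>j\<in>Jset nI nJ. 0 \<le> z j t) \<and>
        min (\<Sum>i\<in>Iset nI. y i t) (\<Sum>j\<in>Jset nI nJ. z j t) = 0)"

end

theory Submission
  imports Defs
begin

text \<open>
  A bipartite tree of diameter 3 is a double star: some \<open>i0 \<in> \<I>\<close> is adjacent to all
  of \<open>\<J>\<close>, and every other \<open>i \<in> \<I>\<close> has a neighbour in \<open>\<J>\<close>.
  Since (S1) and (S2) are linear, a new solution is obtained by adding a perturbation.
  The extra input \<open>f\<close> is used to lower \<open>z\<close> as far as possible and the rest is added to
  \<open>y\<close>, which preserves (S3) and (S4); the input of a leaf flows to its neighbour and is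
  redistributed by \<open>i0\<close> over \<open>\<J>\<close> in proportion to \<open>z\<close>. Then \<open>\<eta>\<close> is the primitive of a
  bounded rate, nonnegative except where \<open>i0\<close> has to send flow back; an extra input
  to \<open>i0\<close> during the initial period \<open>[0, 1/\<mu>\<^sub>m\<^sub>i\<^sub>n]\<close> pays for that.
\<close>

section \<open>Bipartite trees of diameter three\<close>

lemma adj_bipartite:
  assumes "E \<subseteq> A \<times> B" "adj E a b"
  shows "(a \<in> A \<and> b \<in> B \<and> (a, b) \<in> E) \<or> (b \<in> A \<and> a \<in> B \<and> (b, a) \<in> E)"
  using assms by (auto simp: adj_def)

lemma adj_from_left:
  assumes "E \<subseteq> A \<times> B" "A \<inter> B = {}" "a \<in> A" "adj E a x"
  shows "x \<in> B" "(a, x) \<in> E"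
  using assms by (auto simp: adj_def)

lemma adj_from_right:
  assumes "E \<subseteq> A \<times> B" "A \<inter> B = {}" "b \<in> B" "adj E b x"
  shows "x \<in> A" "(x, b) \<in> E"
  using assms by (auto simp: adj_def)

lemma walk_singleton [simp]: "walk E [a]"
  by (simp add: walk_def)

lemma walk_Cons_Cons [simp]: "walk E (a # b # xs) \<longleftrightarrow> adj E a b \<and> walk E (b # xs)"
  unfolding walk_def by (auto simp: nth_Cons' less_Suc_eq_0_disj split: nat.splits)

lemma graph_dist_le_walk:
  assumes "walk E xs" "hd xs = u" "last xs = v"
  shows "graph_dist E u v \<le> length xs - 1"
proof -
  have "xs \<noteq> []" using assms(1) by (simp add: walk_def)
  then show ?thesis
    unfolding graph_dist_def using assms by (intro Least_le) (auto intro!: exI[of _ xs])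
qed

lemma graph_dist_attained:
  assumes "graph_connected V E" "u \<in> V" "v \<in> V"
  obtains xs where "walk E xs" "hd xs = u" "last xs = v" "length xs = Suc (graph_dist E u v)"
proof -
  obtain xs where xs: "walk E xs" "hd xs = u" "last xs = v"
    using assms unfolding graph_connected_def by blast
  then have "\<exists>n xs. walk E xs \<and> hd xs = u \<and> last xs = v \<and> length xs = Suc n"
    by (intro exI[of _ "length xs - 1"] exI[of _ xs]) (auto simp: walk_def)
  from LeastI_ex[OF this] show ?thesis
    using that unfolding graph_dist_def by blast
qed

lemma finite_graph_dists:
  assumes "finite V" shows "finite {graph_dist E u v | u v. u \<in> V \<and> v \<in> V}"
proof -
  have "{graph_dist E u v | u v. u \<in> V \<and> v \<in> V} = (\<lambda>(u, v). graph_dist E u v) ` (V \<times> V)"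
    by auto
  then show ?thesis using assms by simp
qed

lemma graph_dist_le_diameter:
  assumes "finite V" "u \<in> V" "v \<in> V"
  shows "graph_dist E u v \<le> diameter V E"
  unfolding diameter_def by (rule Max_ge) (use assms finite_graph_dists in auto)

lemma diameter_attained:
  assumes "finite V" "V \<noteq> {}"
  obtains u v where "u \<in> V" "v \<in> V" "graph_dist E u v = diameter V E"
proof -
  obtain u0 where "u0 \<in> V" using assms(2) by blast
  then have "{graph_dist E u v | u v. u \<in> V \<and> v \<in> V} \<noteq> {}" by auto
  then have "diameter V E \<in> {graph_dist E u v | u v. u \<in> V \<and> v \<in> V}"
    unfolding diameter_def by (rule Max_in[OF finite_graph_dists[OF assms(1)]])
  then obtain u v where "u \<in> V" "v \<in> V" "diameter V E = graph_dist E u v" by auto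
  then show ?thesis using that by simp
qed

lemma graph_dist_3_path:
  assumes conn: "graph_connected V E" and "u \<in> V" "v \<in> V" and dist: "graph_dist E u v = 3"
  obtains a1 a2 where "adj E u a1" "adj E a1 a2" "adj E a2 v" "\<not> adj E u v"
proof -
  obtain xs where xs: "walk E xs" "hd xs = u" "last xs = v" "length xs = Suc (graph_dist E u v)"
    by (rule graph_dist_attained[OF conn \<open>u \<in> V\<close> \<open>v \<in> V\<close>])
  then have "length xs = 4" using dist by simp
  then obtain x0 a1 a2 x3 where "xs = [x0, a1, a2, x3]"
    by (auto simp: numeral_eq_Suc length_Suc_conv)
  then have "adj E u a1" "adj E a1 a2" "adj E a2 v" using xs(1-3) by auto
  moreover have "graph_dist E u v \<le> 1" if "adj E u v"
    using graph_dist_le_walk[of E "[u, v]" u v] that by simp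
  ultimately show ?thesis using that dist by fastforce
qed

lemma bipartite_walk_common_neighbour:
  assumes sub: "E \<subseteq> A \<times> B" and disj: "A \<inter> B = {}"
    and walk: "walk E xs" "length xs \<le> 4" "hd xs = a" "last xs = b"
    and "a \<noteq> b" and same_side: "(a \<in> A \<and> b \<in> A) \<or> (a \<in> B \<and> b \<in> B)"
  shows "\<exists>m. adj E a m \<and> adj E m b"
proof -
  have "xs \<noteq> []" using walk(1) by (simp add: walk_def)
  then consider "xs = [a]" | "xs = [a, b]" | m where "xs = [a, m, b]"
    | m m' where "xs = [a, m, m', b]"
    using walk(2-4)
    by (cases xs; cases "tl xs"; cases "tl (tl xs)"; cases "tl (tl (tl xs))") auto
  then show ?thesis
  proof cases
    case 2
    then show ?thesis using walk(1) adj_bipartite[OF sub, of a b] disj same_side by auto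
  next
    case (4 m m')
    then have "adj E a m" "adj E m m'" "adj E m' b" using walk(1) by auto
    then show ?thesis
      using adj_bipartite[OF sub, of a m] adj_bipartite[OF sub, of m m'] adj_bipartite[OF sub, of m' b]
        disj same_side by auto
  qed (use walk \<open>a \<noteq> b\<close> in auto)
qed

lemma diameter_le_3_common_neighbour:
  assumes sub: "E \<subseteq> A \<times> B" and disj: "A \<inter> B = {}"
    and fin: "finite (A \<union> B)" and conn: "graph_connected (A \<union> B) E"
    and diam: "diameter (A \<union> B) E \<le> 3"
    and "a \<noteq> b" and same_side: "(a \<in> A \<and> b \<in> A) \<or> (a \<in> B \<and> b \<in> B)"
  shows "\<exists>m. adj E a m \<and> adj E m b"
proof -
  have V: "a \<in> A \<union> B" "b \<in> A \<union> B" using same_side by auto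
  obtain xs where xs: "walk E xs" "hd xs = a" "last xs = b" "length xs = Suc (graph_dist E a b)"
    using graph_dist_attained[OF conn V] .
  have "graph_dist E a b \<le> 3"
    using graph_dist_le_diameter[OF fin V, of E] diam by linarith
  then have "length xs \<le> 4" using xs(4) by simp
  from bipartite_walk_common_neighbour[OF sub disj xs(1) this xs(2,3) \<open>a \<noteq> b\<close> same_side]
  show ?thesis .
qed

text \<open>
  A second neighbour \<open>a\<close> of \<open>u\<close> would close a cycle of length 4 or 6 through a common
  neighbour of \<open>a\<close> and \<open>v\<close>.
\<close>
lemma acyclic_induced_path_end_is_leaf:
  assumes sub: "E \<subseteq> A \<times> B" and disj: "A \<inter> B = {}" and acyclic: "\<not> has_cycle E"
    and common: "\<And>a a'. a \<noteq> a' \<Longrightarrow> a \<in> A \<Longrightarrow> a' \<in> A \<Longrightarrow> \<exists>m. adj E a m \<and> adj E m a'"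
    and path: "(a0, u) \<in> E" "(a0, b0) \<in> E" "(v, b0) \<in> E" "(v, u) \<notin> E"
    and "(a, u) \<in> E"
  shows "a = a0"
proof (rule ccontr)
  assume "a \<noteq> a0"
  have in_A: "a \<in> A" "a0 \<in> A" "v \<in> A" and in_B: "u \<in> B" "b0 \<in> B"
    using sub path \<open>(a, u) \<in> E\<close> by auto
  have "a \<noteq> v" using path(4) \<open>(a, u) \<in> E\<close> by auto
  then obtain b where "adj E a b" "adj E b v" using common in_A by blast
  then have b: "(a, b) \<in> E" "(v, b) \<in> E" "b \<in> B"
    using adj_bipartite[OF sub, of a b] adj_bipartite[OF sub, of b v] in_A disj by auto
  have not_A: "u \<notin> A" "b0 \<notin> A" "b \<notin> A" using in_B b(3) disj by auto
  have "u \<noteq> b0" "u \<noteq> b" "v \<noteq> a0" using path b(2) by auto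
  have "has_cycle E"
  proof (cases "b = b0")
    case True
    have "distinct [a, u, a0, b0]" "walk E [a, u, a0, b0]" "adj E b0 a"
      using in_A not_A \<open>a \<noteq> a0\<close> \<open>u \<noteq> b0\<close> \<open>(a, u) \<in> E\<close> path b True by (auto simp: adj_def)
    then show ?thesis unfolding has_cycle_def by (intro exI[of _ "[a, u, a0, b0]"]) simp
  next
    case False
    have "distinct [u, a, b, v, b0, a0]" "walk E [u, a, b, v, b0, a0]" "adj E a0 u"
      using in_A not_A False \<open>a \<noteq> a0\<close> \<open>a \<noteq> v\<close> \<open>u \<noteq> b0\<close> \<open>u \<noteq> b\<close> \<open>v \<noteq> a0\<close> \<open>(a, u) \<in> E\<close> path b
      by (auto simp: adj_def)
    then show ?thesis unfolding has_cycle_def by (intro exI[of _ "[u, a, b, v, b0, a0]"]) simp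
  qed
  then show False using acyclic by blast
qed

lemma acyclic_induced_path_center_dominates:
  assumes sub: "E \<subseteq> A \<times> B" and disj: "A \<inter> B = {}" and acyclic: "\<not> has_cycle E"
    and common: "\<And>a a'. a \<noteq> a' \<Longrightarrow> (a \<in> A \<and> a' \<in> A) \<or> (a \<in> B \<and> a' \<in> B) \<Longrightarrow>
                   \<exists>m. adj E a m \<and> adj E m a'"
    and path: "(a0, u) \<in> E" "(a0, b0) \<in> E" "(v, b0) \<in> E" "(v, u) \<notin> E"
    and "b \<in> B"
  shows "(a0, b) \<in> E"
proof (cases "b = u")
  case False
  have "u \<in> B" using sub path by auto
  then obtain m where "adj E b m" "adj E m u" using common[OF False] \<open>b \<in> B\<close> by blast
  then have "(m, u) \<in> E" "(m, b) \<in> E"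
    using adj_bipartite[OF sub, of b m] adj_bipartite[OF sub, of m u] \<open>b \<in> B\<close> \<open>u \<in> B\<close> disj by auto
  moreover have "m = a0"
    by (rule acyclic_induced_path_end_is_leaf[OF sub disj acyclic _ path \<open>(m, u) \<in> E\<close>])
       (use common in blast)
  ultimately show ?thesis by simp
qed (use path in simp)

lemma diameter_3_tree_dominating_vertex:
  assumes sub: "E \<subseteq> A \<times> B" and disj: "A \<inter> B = {}"
    and tree: "is_tree (A \<union> B) E" and diam: "diameter (A \<union> B) E = 3"
  obtains a0 where "a0 \<in> A" "B \<noteq> {}" "\<And>b. b \<in> B \<Longrightarrow> (a0, b) \<in> E"
proof -
  have fin: "finite (A \<union> B)" and ne: "A \<union> B \<noteq> {}" and conn: "graph_connected (A \<union> B) E"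
    and acyclic: "\<not> has_cycle E"
    using tree unfolding is_tree_def by auto
  have common: "\<exists>m. adj E a m \<and> adj E m a'"
    if "a \<noteq> a'" "(a \<in> A \<and> a' \<in> A) \<or> (a \<in> B \<and> a' \<in> B)" for a a'
    using diameter_le_3_common_neighbour[OF sub disj fin conn _ that] diam by simp
  have dominates: "(a0, b) \<in> E"
    if "(a0, u') \<in> E" "(a0, b0) \<in> E" "(v', b0) \<in> E" "(v', u') \<notin> E" "b \<in> B" for a0 u' b0 v' b
    by (rule acyclic_induced_path_center_dominates[OF sub disj acyclic _ that]) (use common in blast)
  obtain u v where uv: "u \<in> A \<union> B" "v \<in> A \<union> B" "graph_dist E u v = 3"
    by (rule diameter_attained[OF fin ne, where E = E, unfolded diam])
  then obtain a1 a2 where path: "adj E u a1" "adj E a1 a2" "adj E a2 v" and "\<not> adj E u v"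
    using graph_dist_3_path[OF conn] by blast
  then have uv_E: "(u, v) \<notin> E" "(v, u) \<notin> E" by (auto simp: adj_def)
  show ?thesis
  proof (cases "u \<in> B")
    case True
    have a1: "a1 \<in> A" "(a1, u) \<in> E"
      using adj_from_right[OF sub disj True path(1)] by auto
    then have a2: "a2 \<in> B" "(a1, a2) \<in> E" using adj_from_left[OF sub disj _ path(2)] by auto
    then have "(v, a2) \<in> E" using adj_from_right[OF sub disj _ path(3)] by auto
    then show ?thesis
      using that[OF a1(1)] dominates[OF a1(2) a2(2) _ uv_E(2)] True by blast
  next
    case False
    then have "u \<in> A" using uv(1) by blast
    then have a1: "a1 \<in> B" "(u, a1) \<in> E" using adj_from_left[OF sub disj _ path(1)] by auto
    then have a2: "a2 \<in> A" "(a2, a1) \<in> E"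
      using adj_from_right[OF sub disj _ path(2)] by auto
    then have "(a2, v) \<in> E" using adj_from_left[OF sub disj _ path(3)] by auto
    then show ?thesis
      using that[OF a2(1)] dominates[OF \<open>(a2, v) \<in> E\<close> a2(2) a1(2) uv_E(1)] a1(1) by blast
  qed
qed

lemma connected_bipartite_neighbour:
  assumes sub: "E \<subseteq> A \<times> B" and disj: "A \<inter> B = {}"
    and conn: "graph_connected (A \<union> B) E" and "a \<in> A" "b \<in> B"
  obtains b' where "b' \<in> B" "(a, b') \<in> E"
proof -
  obtain xs where xs: "walk E xs" "hd xs = a" "last xs = b"
    using conn \<open>a \<in> A\<close> \<open>b \<in> B\<close> unfolding graph_connected_def by blast
  have "xs \<noteq> []" using xs(1) by (simp add: walk_def)
  moreover have "a \<noteq> b" using \<open>a \<in> A\<close> \<open>b \<in> B\<close> disj by auto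
  ultimately obtain c xs' where "xs = a # c # xs'"
    using xs(2,3) by (cases xs; cases "tl xs") auto
  then have "adj E a c" using xs(1) by simp
  then show ?thesis using that adj_from_left[OF sub disj \<open>a \<in> A\<close>] by blast
qed

section \<open>Bounded measurable functions and their primitives\<close>

lemma regular_onI:
  assumes "f \<in> borel_measurable (restrict_space lborel {0..T})"
    and "\<And>t. t \<in> {0..T} \<Longrightarrow> \<bar>f t\<bar> \<le> M"
  shows "regular_on T f"
  using assms unfolding regular_on_def bounded_iff by (auto intro!: exI[of _ M])

lemma regular_on_boundE:
  assumes "regular_on T f"
  obtains M where "\<And>t. t \<in> {0..T} \<Longrightarrow> \<bar>f t\<bar> \<le> M"
proof -
  obtain M where "\<forall>x\<in>f ` {0..T}. norm x \<le> M"
    using assms unfolding regular_on_def bounded_iff by blast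
  then show ?thesis by (intro that) auto
qed

lemma regular_on_measurable:
  "regular_on T f \<Longrightarrow> f \<in> borel_measurable (restrict_space lborel {0..T})"
  by (simp add: regular_on_def)

lemma regular_on_integrable:
  assumes "regular_on T f" "t \<le> T"
  shows "f integrable_on {0..t}"
proof -
  obtain M where M: "\<And>t. t \<in> {0..T} \<Longrightarrow> \<bar>f t\<bar> \<le> M"
    using regular_on_boundE[OF assms(1)] by blast
  have "f \<in> borel_measurable (lebesgue_on {0..T})"
    using regular_on_measurable[OF assms(1)]
    by (metis borel_measurable_subalgebra eucl_ivals(5) mono_restrict_space
        sets_completionI_sets sets_lborel space_restrict_space2 subsetI)
  then have "f integrable_on {0..T}"
    by (rule measurable_bounded_by_integrable_imp_integrable_real[where g = "\<lambda>_. M"]) (use M in auto)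
  then show ?thesis by (rule integrable_on_subinterval) (use assms(2) in auto)
qed

lemma regular_on_continuous:
  assumes "continuous_on {0..T} f"
  shows "regular_on T f"
  unfolding regular_on_def
proof
  show "f \<in> borel_measurable (restrict_space lborel {0..T})"
    using borel_measurable_continuous_on_restrict[OF assms] measurable_cong_sets by fastforce
  show "bounded (f ` {0..T})"
    by (rule compact_imp_bounded compact_continuous_image assms compact_Icc)+
qed

lemma regular_on_compose_continuous:
  assumes f: "regular_on T f" and g: "regular_on T g"
    and h: "continuous_on UNIV (\<lambda>p. h (fst p) (snd p))"
  shows "regular_on T (\<lambda>t. h (f t) (g t))"
  unfolding regular_on_def
proof
  show "(\<lambda>t. h (f t) (g t)) \<in> borel_measurable (restrict_space lborel {0..T})"
    by (rule borel_measurable_continuous_Pair[OF regular_on_measurable[OF f]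
          regular_on_measurable[OF g] h])
  let ?K = "closure (f ` {0..T}) \<times> closure (g ` {0..T})"
  have "compact ?K"
    using f g by (simp add: regular_on_def compact_Times compact_closure)
  then have "compact ((\<lambda>p. h (fst p) (snd p)) ` ?K)"
    by (intro compact_continuous_image continuous_on_subset[OF h subset_UNIV])
  moreover have "(\<lambda>t. h (f t) (g t)) ` {0..T} \<subseteq> (\<lambda>p. h (fst p) (snd p)) ` ?K"
  proof (rule image_subsetI)
    fix t assume "t \<in> {0..T}"
    then have "(f t, g t) \<in> ?K" by (auto intro: closure_subset[THEN subsetD])
    then show "h (f t) (g t) \<in> (\<lambda>p. h (fst p) (snd p)) ` ?K" by (rule rev_image_eqI) simp
  qed
  ultimately show "bounded ((\<lambda>t. h (f t) (g t)) ` {0..T})"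
    by (meson bounded_subset compact_imp_bounded)
qed

lemma regular_on_const [simp]: "regular_on T (\<lambda>t. c)"
  by (rule regular_onI[where M = "\<bar>c\<bar>"]) auto

lemma regular_on_add:
  assumes "regular_on T f" "regular_on T g" shows "regular_on T (\<lambda>t. f t + g t)"
  by (rule regular_on_compose_continuous[OF assms, where h = "(+)"]) (intro continuous_intros)

lemma regular_on_diff:
  assumes "regular_on T f" "regular_on T g" shows "regular_on T (\<lambda>t. f t - g t)"
  by (rule regular_on_compose_continuous[OF assms, where h = "(-)"]) (intro continuous_intros)

lemma regular_on_mult:
  assumes "regular_on T f" "regular_on T g" shows "regular_on T (\<lambda>t. f t * g t)"
  by (rule regular_on_compose_continuous[OF assms, where h = "(*)"]) (intro continuous_intros)

lemma regular_on_min: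
  assumes "regular_on T f" "regular_on T g" shows "regular_on T (\<lambda>t. min (f t) (g t))"
  by (rule regular_on_compose_continuous[OF assms, where h = "min"]) (intro continuous_intros)

lemma regular_on_max:
  assumes "regular_on T f" "regular_on T g" shows "regular_on T (\<lambda>t. max (f t) (g t))"
  by (rule regular_on_compose_continuous[OF assms, where h = "max"]) (intro continuous_intros)

lemma regular_on_cmult: "regular_on T f \<Longrightarrow> regular_on T (\<lambda>t. c * f t)"
  by (rule regular_on_mult[OF regular_on_const])

lemma regular_on_sum:
  "finite A \<Longrightarrow> (\<And>a. a \<in> A \<Longrightarrow> regular_on T (g a)) \<Longrightarrow> regular_on T (\<lambda>t. \<Sum>a\<in>A. g a t)"
  by (induction A rule: finite_induct) (auto intro: regular_on_add)

lemma regular_on_dominated: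
  assumes "f \<in> borel_measurable (restrict_space lborel {0..T})" "regular_on T g"
    and "\<And>t. t \<in> {0..T} \<Longrightarrow> \<bar>f t\<bar> \<le> \<bar>g t\<bar>"
  shows "regular_on T f"
proof -
  obtain M where "\<And>t. t \<in> {0..T} \<Longrightarrow> \<bar>g t\<bar> \<le> M"
    using regular_on_boundE[OF assms(2)] by blast
  with assms show ?thesis by (intro regular_onI[where M = M]) (auto intro: order_trans)
qed

lemma abs_le_sup_norm:
  assumes "regular_on T f" "t \<in> {0..T}"
  shows "\<bar>f t\<bar> \<le> sup_norm T f"
proof -
  obtain M where "\<And>t. t \<in> {0..T} \<Longrightarrow> \<bar>f t\<bar> \<le> M"
    using regular_on_boundE[OF assms(1)] by blast
  then have "bdd_above ((\<lambda>s. \<bar>f s\<bar>) ` {0..T})" by (intro bdd_aboveI2[where M = M])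
  then show ?thesis unfolding sup_norm_def using assms(2) by (rule cSUP_upper[rotated])
qed

lemma Jint_add:
  "f integrable_on {0..t} \<Longrightarrow> g integrable_on {0..t} \<Longrightarrow> Jint (\<lambda>s. f s + g s) t = Jint f t + Jint g t"
  unfolding Jint_def by (rule integral_add)

lemma Jint_cmult [simp]: "Jint (\<lambda>s. c * f s) t = c * Jint f t"
  unfolding Jint_def by simp

lemma Jint_sum:
  "finite A \<Longrightarrow> (\<And>a. a \<in> A \<Longrightarrow> g a integrable_on {0..t}) \<Longrightarrow>
    Jint (\<lambda>s. \<Sum>a\<in>A. g a s) t = (\<Sum>a\<in>A. Jint (g a) t)"
  unfolding Jint_def by (rule integral_sum)

lemma Jint_continuous_on: "regular_on T f \<Longrightarrow> continuous_on {0..T} (Jint f)"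
  unfolding Jint_def[abs_def]
  by (rule indefinite_integral_continuous_1) (rule regular_on_integrable, auto)

lemma Jint_nonneg:
  assumes "regular_on T f" "t \<in> {0..T}" "\<And>s. s \<in> {0..T} \<Longrightarrow> 0 \<le> f s"
  shows "0 \<le> Jint f t"
  unfolding Jint_def
  by (rule integral_nonneg) (use assms regular_on_integrable in auto)

lemma Jint_mono_on:
  assumes "regular_on T f" "\<And>s. s \<in> {0..T} \<Longrightarrow> 0 \<le> f s"
  shows "mono_on {0..T} (Jint f)"
proof (rule mono_onI)
  fix r s assume "r \<in> {0..T}" "s \<in> {0..T}" "r \<le> s"
  then show "Jint f r \<le> Jint f s" unfolding Jint_def
    by (intro integral_subset_le) (use assms regular_on_integrable in auto)
qed

lemma Jint_le:
  assumes "regular_on T f" "t \<in> {0..T}" "\<And>s. s \<in> {0..T} \<Longrightarrow> f s \<le> K" "0 \<le> K"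
  shows "Jint f t \<le> T * K"
proof -
  have "Jint f t \<le> integral {0..t} (\<lambda>_. K)" unfolding Jint_def
    by (rule integral_le) (use assms regular_on_integrable in auto)
  also have "\<dots> = t * K" using assms(2) by simp
  also have "\<dots> \<le> T * K" using assms by (auto intro: mult_right_mono)
  finally show ?thesis .
qed

lemma Jint_step:
  assumes "0 < \<tau>" "0 \<le> t"
  shows "Jint (\<lambda>s. if s \<le> \<tau> then c else 0) t = c * min t \<tau>"
proof -
  have "((\<lambda>s. c) has_integral c * min t \<tau>) {0..min t \<tau>}"
    using has_integral_const_real[of c 0 "min t \<tau>"] assms by (simp add: mult.commute)
  then have "((\<lambda>s. if s \<in> {0..min t \<tau>} then c else 0) has_integral c * min t \<tau>) {0..t}"
    by (subst has_integral_restrict) auto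
  then have "((\<lambda>s. if s \<le> \<tau> then c else 0) has_integral c * min t \<tau>) {0..t}"
    by (rule has_integral_eq[rotated]) auto
  then show ?thesis unfolding Jint_def by (simp add: integral_unique)
qed

section \<open>Perturbing a solution of (S1)--(S4)\<close>

lemma Jint_rate_split:
  assumes "finite A" "t \<in> {0..T}" "regular_on T g" "regular_on T d"
    and "\<And>j. j \<in> A \<Longrightarrow> regular_on T (\<Delta> j)"
  shows "Jint (\<lambda>s. g s + (\<Sum>j\<in>A. c j * \<Delta> j s) + a * d s) t
           = Jint g t + (\<Sum>j\<in>A. c j * Jint (\<Delta> j) t) + a * Jint d t"
proof -
  have int: "\<And>u. regular_on T u \<Longrightarrow> u integrable_on {0..t}"
    using assms(2) by (auto intro: regular_on_integrable)
  have "regular_on T (\<lambda>s. \<Sum>j\<in>A. c j * \<Delta> j s)"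
    using assms(1,5) by (intro regular_on_sum regular_on_cmult) auto
  moreover have "Jint (\<lambda>s. \<Sum>j\<in>A. c j * \<Delta> j s) t = (\<Sum>j\<in>A. c j * Jint (\<Delta> j) t)"
    using assms(1,5) by (subst Jint_sum) (auto intro: int regular_on_cmult)
  ultimately show ?thesis
    using assms(3,4) by (simp add: Jint_add int regular_on_add regular_on_cmult)
qed

lemma perturbed_row_balance:
  assumes "finite A" "t \<in> {0..T}"
    and reg: "\<And>j. j \<in> A \<Longrightarrow> regular_on T (\<psi> j)" "\<And>j. j \<in> A \<Longrightarrow> regular_on T (\<Delta> j)"
      "regular_on T y" "regular_on T dy" "regular_on T g"
    and old: "(\<Sum>j\<in>A. \<psi> j t + c j * Jint (\<psi> j) t) = w - y t - a * Jint y t"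
    and row: "(\<Sum>j\<in>A. \<Delta> j t) = f + Jint g t - dy t"
  shows "(\<Sum>j\<in>A. (\<psi> j t + \<Delta> j t) + c j * Jint (\<lambda>s. \<psi> j s + \<Delta> j s) t)
           = (w + f + Jint (\<lambda>s. g s + (\<Sum>j\<in>A. c j * \<Delta> j s) + a * dy s) t)
             - (y t + dy t) - a * Jint (\<lambda>s. y s + dy s) t"
proof -
  have int: "\<And>u. regular_on T u \<Longrightarrow> u integrable_on {0..t}"
    using assms(2) by (auto intro: regular_on_integrable)
  have "(\<Sum>j\<in>A. (\<psi> j t + \<Delta> j t) + c j * Jint (\<lambda>s. \<psi> j s + \<Delta> j s) t)
      = (\<Sum>j\<in>A. \<psi> j t + c j * Jint (\<psi> j) t) + (\<Sum>j\<in>A. \<Delta> j t) + (\<Sum>j\<in>A. c j * Jint (\<Delta> j) t)"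
    using reg(1,2) by (simp add: Jint_add int sum.distrib algebra_simps)
  then show ?thesis
    using old row Jint_rate_split[OF assms(1,2) reg(5,4,2)] reg(3,4)
    by (simp add: Jint_add int algebra_simps)
qed

lemma admissible_perturbation:
  fixes \<Delta> :: "nat \<Rightarrow> nat \<Rightarrow> real \<Rightarrow> real" and dy dz f g h :: "nat \<Rightarrow> real \<Rightarrow> real"
  assumes adm: "admissible nI nJ E \<mu> \<theta> T \<psi> y z w"
    and reg: "\<And>i j. i \<in> Iset nI \<Longrightarrow> j \<in> Jset nI nJ \<Longrightarrow> regular_on T (\<Delta> i j)"
      "\<And>i. i \<in> Iset nI \<Longrightarrow> regular_on T (dy i)" "\<And>j. j \<in> Jset nI nJ \<Longrightarrow> regular_on T (dz j)"
      "\<And>i. i \<in> Iset nI \<Longrightarrow> regular_on T (f i)" "\<And>i. i \<in> Iset nI \<Longrightarrow> regular_on T (g i)"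
    and h: "\<And>i s. h i s = g i s + (\<Sum>j\<in>Jset nI nJ. \<mu> i j * \<Delta> i j s) + \<theta> i * dy i s"
    and off_E: "\<And>t i j. t \<in> {0..T} \<Longrightarrow> i \<in> Iset nI \<Longrightarrow> j \<in> Jset nI nJ \<Longrightarrow> (i, j) \<notin> E \<Longrightarrow>
                  \<Delta> i j t = 0"
    and row: "\<And>t i. t \<in> {0..T} \<Longrightarrow> i \<in> Iset nI \<Longrightarrow>
                (\<Sum>j\<in>Jset nI nJ. \<Delta> i j t) = f i t + Jint (g i) t - dy i t"
    and col: "\<And>t j. t \<in> {0..T} \<Longrightarrow> j \<in> Jset nI nJ \<Longrightarrow> (\<Sum>i\<in>Iset nI. \<Delta> i j t) = dz j t"
    and y_nonneg: "\<And>t i. t \<in> {0..T} \<Longrightarrow> i \<in> Iset nI \<Longrightarrow> 0 \<le> y i t + dy i t"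
    and z_nonneg: "\<And>t j. t \<in> {0..T} \<Longrightarrow> j \<in> Jset nI nJ \<Longrightarrow> 0 \<le> z j t - dz j t"
    and compl: "\<And>t. t \<in> {0..T} \<Longrightarrow>
                  min (\<Sum>i\<in>Iset nI. y i t + dy i t) (\<Sum>j\<in>Jset nI nJ. z j t - dz j t) = 0"
  shows "admissible nI nJ E \<mu> \<theta> T (\<lambda>i j t. \<psi> i j t + \<Delta> i j t) (\<lambda>i t. y i t + dy i t)
           (\<lambda>j t. z j t - dz j t) (\<lambda>i t. w i t + f i t + Jint (h i) t)"
proof -
  note old = adm[unfolded admissible_def]
  have h_eq: "h i = (\<lambda>s. g i s + (\<Sum>j\<in>Jset nI nJ. \<mu> i j * \<Delta> i j s) + \<theta> i * dy i s)" for i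
    using h by blast
  have "regular_on T (h i)" if "i \<in> Iset nI" for i
    unfolding h_eq using reg that by (intro regular_on_add regular_on_sum regular_on_cmult) auto
  then have "regular_on T (\<lambda>t. w i t + f i t + Jint (h i) t)" if "i \<in> Iset nI" for i
    by (intro regular_on_add regular_on_continuous[OF Jint_continuous_on]) (use old reg(4) that in auto)
  moreover have "(\<Sum>j\<in>Jset nI nJ. (\<psi> i j t + \<Delta> i j t) + \<mu> i j * Jint (\<lambda>s. \<psi> i j s + \<Delta> i j s) t)
      = (w i t + f i t + Jint (h i) t) - (y i t + dy i t) - \<theta> i * Jint (\<lambda>s. y i s + dy i s) t"
    if "t \<in> {0..T}" "i \<in> Iset nI" for i t
    unfolding h_eq using old reg that
    by (intro perturbed_row_balance row) auto
  moreover have "(\<Sum>i\<in>Iset nI. \<psi> i j t + \<Delta> i j t) = - (z j t - dz j t)"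
    if "t \<in> {0..T}" "j \<in> Jset nI nJ" for t j
    using old col[OF that] that by (simp add: sum.distrib)
  ultimately show ?thesis
    unfolding admissible_def
    using old reg off_E y_nonneg z_nonneg compl
    by (auto intro: regular_on_add regular_on_diff)
qed

section \<open>The construction on a double star\<close>

lemma sum_weighted_le:
  fixes c x :: "'a \<Rightarrow> real"
  assumes "\<And>a. a \<in> A \<Longrightarrow> 0 \<le> x a" "\<And>a. a \<in> A \<Longrightarrow> c a \<le> M"
  shows "(\<Sum>a\<in>A. c a * x a) \<le> M * (\<Sum>a\<in>A. x a)"
  unfolding sum_distrib_left by (rule sum_mono) (use assms in \<open>auto intro: mult_right_mono\<close>)

lemma sum_weighted_ge:
  fixes c x :: "'a \<Rightarrow> real"
  assumes "\<And>a. a \<in> A \<Longrightarrow> 0 \<le> x a" "\<And>a. a \<in> A \<Longrightarrow> m \<le> c a"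
  shows "m * (\<Sum>a\<in>A. x a) \<le> (\<Sum>a\<in>A. c a * x a)"
  unfolding sum_distrib_left by (rule sum_mono) (use assms in \<open>auto intro: mult_right_mono\<close>)

lemma allocation_bounds:
  fixes a p l z :: real
  assumes "0 \<le> a" "0 \<le> p" "0 \<le> l" "0 \<le> z"
  defines "X \<equiv> min l (max 0 (z - a - p))" and "D \<equiv> min z (a + p + l)"
  shows "0 \<le> X" "X \<le> l" "0 \<le> D" "D \<le> z" "D \<le> a + p + l" "D \<le> a + p + X"
    and "0 < X \<Longrightarrow> p + X \<le> D" and "D < z \<Longrightarrow> D = a + p + l"
  unfolding X_def D_def using assms by (auto simp: min_def max_def split: if_splits)

locale star_network =
  fixes nI nJ :: nat and E :: "(nat \<times> nat) set"
    and \<mu> :: "nat \<Rightarrow> nat \<Rightarrow> real" and \<theta> :: "nat \<Rightarrow> real"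
    and i0 :: nat and nb :: "nat \<Rightarrow> nat"
  assumes E_sub: "E \<subseteq> Iset nI \<times> Jset nI nJ"
    and mu_pos: "\<And>i j. (i, j) \<in> E \<Longrightarrow> 0 < \<mu> i j"
    and mu_zero: "\<And>i j. (i, j) \<notin> E \<Longrightarrow> \<mu> i j = 0"
    and theta_nonneg: "\<And>i. i \<in> Iset nI \<Longrightarrow> 0 \<le> \<theta> i"
    and center: "i0 \<in> Iset nI"
    and center_adj: "\<And>j. j \<in> Jset nI nJ \<Longrightarrow> (i0, j) \<in> E"
    and nb_in: "\<And>i. i \<in> Iset nI \<Longrightarrow> nb i \<in> Jset nI nJ"
    and nb_adj: "\<And>i. i \<in> Iset nI \<Longrightarrow> (i, nb i) \<in> E"
begin

abbreviation "I \<equiv> Iset nI"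
abbreviation "J \<equiv> Jset nI nJ"

definition mu_min :: real where "mu_min = Min (\<mu> i0 ` J)"
definition mu_max :: real where "mu_max = Max (\<mu> i0 ` J)"
definition rate_total :: real where "rate_total = (\<Sum>i\<in>I. \<Sum>j\<in>J. \<mu> i j) + (\<Sum>i\<in>I. \<theta> i)"
definition m5 :: real where "m5 = rate_total * (2 + mu_max / mu_min)"

lemma J_nonempty: "J \<noteq> {}"
  using nb_in[OF center] by blast

lemma mu_nonneg: "0 \<le> \<mu> i j"
  using mu_pos[of i j] mu_zero[of i j] by (cases "(i, j) \<in> E") auto

lemma mu_min_le: "j \<in> J \<Longrightarrow> mu_min \<le> \<mu> i0 j"
  unfolding mu_min_def by (rule Min_le) auto

lemma mu_max_ge: "j \<in> J \<Longrightarrow> \<mu> i0 j \<le> mu_max"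
  unfolding mu_max_def by (rule Max_ge) auto

lemma mu_min_pos: "0 < mu_min"
proof -
  have "mu_min \<in> \<mu> i0 ` J" unfolding mu_min_def by (rule Min_in) (use J_nonempty in auto)
  then show ?thesis using center_adj mu_pos by auto
qed

lemma mu_min_le_max: "mu_min \<le> mu_max"
  using J_nonempty mu_min_le mu_max_ge by (meson ex_in_conv order_trans)

lemma mu_theta_le_rate_total:
  assumes "i \<in> I" "j \<in> J"
  shows "\<mu> i j + \<theta> i \<le> rate_total"
proof -
  have "\<mu> i j \<le> (\<Sum>j\<in>J. \<mu> i j)" by (rule member_le_sum) (use assms mu_nonneg in auto)
  also have "\<dots> \<le> (\<Sum>i\<in>I. \<Sum>j\<in>J. \<mu> i j)"
    by (rule member_le_sum[where f = "\<lambda>i. \<Sum>j\<in>J. \<mu> i j"]) (use assms mu_nonneg in \<open>auto intro: sum_nonneg\<close>)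
  finally show ?thesis
    unfolding rate_total_def using member_le_sum[of i I \<theta>] assms theta_nonneg by fastforce
qed

lemma mu_max_theta_le_rate_total: "mu_max + \<theta> i0 \<le> rate_total"
proof -
  have "mu_max \<in> \<mu> i0 ` J" unfolding mu_max_def by (rule Max_in) (use J_nonempty in auto)
  then show ?thesis using mu_theta_le_rate_total center by auto
qed

lemma rate_total_nonneg: "0 \<le> rate_total"
  using mu_max_theta_le_rate_total mu_min_pos mu_min_le_max theta_nonneg[OF center] by linarith

lemma rate_total_le_m5: "rate_total \<le> m5"
proof -
  have "1 \<le> 2 + mu_max / mu_min" using mu_min_pos mu_min_le_max by simp
  then have "rate_total * 1 \<le> rate_total * (2 + mu_max / mu_min)"
    using rate_total_nonneg by (rule mult_left_mono)
  then show ?thesis by (simp add: m5_def)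
qed

end

locale star_network_input = star_network +
  fixes T :: real and \<psi> :: "nat \<Rightarrow> nat \<Rightarrow> real \<Rightarrow> real" and y z w f :: "nat \<Rightarrow> real \<Rightarrow> real"
  assumes T_pos: "0 < T"
    and adm: "admissible nI nJ E \<mu> \<theta> T \<psi> y z w"
    and f_regular: "\<And>i. i \<in> Iset nI \<Longrightarrow> regular_on T (f i)"
    and f_nonneg: "\<And>i t. i \<in> Iset nI \<Longrightarrow> t \<in> {0..T} \<Longrightarrow> 0 \<le> f i t"
begin

definition leaves :: "nat set" where "leaves = I - {i0}"
definition fnorm :: real where "fnorm = (\<Sum>i\<in>I. sup_norm T (f i))"

text \<open>
  Sending flow back from \<open>i0\<close> can make the rate of \<open>\<eta> i0\<close> negative. The extra input
  \<open>boost\<close> of \<open>i0\<close> pays for this: up to time \<open>1 / mu_min\<close> directly by its rate, afterwards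
  because the accumulated amount \<open>mu_max * fnorm / mu_min\<close> is absorbed before any
  leaf input (see \<open>rerouting_cost_le\<close>).
\<close>
definition boost_rate :: "real \<Rightarrow> real"
  where "boost_rate s = (if s \<le> 1 / mu_min then mu_max * fnorm else 0)"
definition boost :: "real \<Rightarrow> real" where "boost t = mu_max * fnorm * min t (1 / mu_min)"
definition leaf_input :: "real \<Rightarrow> real" where "leaf_input t = (\<Sum>i\<in>leaves. f i t)"
definition z_total :: "real \<Rightarrow> real" where "z_total t = (\<Sum>j\<in>J. z j t)"
definition total_input :: "real \<Rightarrow> real" where "total_input t = f i0 t + boost t + leaf_input t"
definition absorbed :: "real \<Rightarrow> real" where "absorbed t = min (z_total t) (total_input t)"
definition leaf_absorbed :: "real \<Rightarrow> real"
  where "leaf_absorbed t = min (leaf_input t) (max 0 (z_total t - f i0 t - boost t))"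

text \<open>
  The quotients below are \<open>0\<close> when their denominator vanishes, which is consistent:
  then \<open>leaf_absorbed t = 0\<close>, resp. \<open>absorbed t = 0\<close>.
\<close>
definition leaf_flow :: "nat \<Rightarrow> real \<Rightarrow> real"
  where "leaf_flow i t = leaf_absorbed t / leaf_input t * f i t"
definition z_cut :: "nat \<Rightarrow> real \<Rightarrow> real" where "z_cut j t = z j t * (absorbed t / z_total t)"
definition inflow :: "nat \<Rightarrow> real \<Rightarrow> real"
  where "inflow j t = (\<Sum>i\<in>{i\<in>leaves. nb i = j}. leaf_flow i t)"

text \<open>
  A leaf \<open>i\<close> sends \<open>leaf_flow i\<close> to \<open>nb i\<close>; the center \<open>i0\<close> then brings the flow into
  each \<open>j\<close> to \<open>z_cut j\<close>, possibly by a negative amount.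
\<close>
definition dpsi :: "nat \<Rightarrow> nat \<Rightarrow> real \<Rightarrow> real"
  where "dpsi i j t =
    (if i = i0 then z_cut j t - inflow j t else if j = nb i then leaf_flow i t else 0)"
definition dy :: "nat \<Rightarrow> real \<Rightarrow> real"
  where "dy i t =
    (if i = i0 then f i0 t + boost t + leaf_absorbed t - absorbed t else f i t - leaf_flow i t)"
definition eta_rate :: "nat \<Rightarrow> real \<Rightarrow> real"
  where "eta_rate i s =
    (if i = i0 then boost_rate s else 0) + (\<Sum>j\<in>J. \<mu> i j * dpsi i j s) + \<theta> i * dy i s"

lemma leaves_split: "I = insert i0 leaves" "i0 \<notin> leaves" "finite leaves"
  using center by (auto simp: leaves_def)

lemma leaves_sub: "i \<in> leaves \<Longrightarrow> i \<in> I \<and> i \<noteq> i0"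
  by (simp add: leaves_def)

lemma z_regular: "j \<in> J \<Longrightarrow> regular_on T (z j)"
  using adm by (simp add: admissible_def)

lemma z_nonneg: "j \<in> J \<Longrightarrow> t \<in> {0..T} \<Longrightarrow> 0 \<le> z j t"
  using adm by (simp add: admissible_def)

lemma fnorm_nonneg: "0 \<le> fnorm"
  unfolding fnorm_def
  by (rule sum_nonneg) (use abs_le_sup_norm[OF f_regular, of _ 0] T_pos in force)

lemma sum_f_le_fnorm: "t \<in> {0..T} \<Longrightarrow> (\<Sum>i\<in>I. f i t) \<le> fnorm"
  unfolding fnorm_def by (rule sum_mono) (use abs_le_sup_norm[OF f_regular] in force)

lemma sum_f_split: "(\<Sum>i\<in>I. f i t) = f i0 t + leaf_input t"
  unfolding leaf_input_def leaves_split(1) using leaves_split(2,3) by simp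

lemma f_le_fnorm: "i \<in> I \<Longrightarrow> t \<in> {0..T} \<Longrightarrow> f i t \<le> fnorm"
  using member_le_sum[of i I "\<lambda>i. f i t"] f_nonneg sum_f_le_fnorm by fastforce

lemma leaf_input_nonneg: "t \<in> {0..T} \<Longrightarrow> 0 \<le> leaf_input t"
  unfolding leaf_input_def by (rule sum_nonneg) (use f_nonneg leaves_sub in auto)

lemma leaf_input_le_fnorm: "t \<in> {0..T} \<Longrightarrow> leaf_input t \<le> fnorm"
  using sum_f_le_fnorm sum_f_split f_nonneg[OF center] by fastforce

lemma z_total_nonneg: "t \<in> {0..T} \<Longrightarrow> 0 \<le> z_total t"
  unfolding z_total_def by (rule sum_nonneg) (use z_nonneg in auto)

lemma boost_nonneg: "t \<in> {0..T} \<Longrightarrow> 0 \<le> boost t"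
  unfolding boost_def using fnorm_nonneg mu_min_pos mu_min_le_max by simp

lemma boost_le: "boost t \<le> mu_max * fnorm / mu_min"
proof -
  have "0 \<le> mu_max * fnorm" using fnorm_nonneg mu_min_pos mu_min_le_max by simp
  then have "mu_max * fnorm * min t (1 / mu_min) \<le> mu_max * fnorm * (1 / mu_min)"
    by (intro mult_left_mono) auto
  then show ?thesis by (simp add: boost_def)
qed

lemma total_input_le: "t \<in> {0..T} \<Longrightarrow> total_input t \<le> fnorm * (1 + mu_max / mu_min)"
  using sum_f_le_fnorm[of t] sum_f_split[of t] boost_le[of t]
  by (simp add: total_input_def algebra_simps)

lemma allocation:
  assumes "t \<in> {0..T}"
  shows "0 \<le> leaf_absorbed t" "leaf_absorbed t \<le> leaf_input t"
    and "0 \<le> absorbed t" "absorbed t \<le> z_total t" "absorbed t \<le> total_input t"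
    and "absorbed t \<le> f i0 t + boost t + leaf_absorbed t"
    and "0 < leaf_absorbed t \<Longrightarrow> boost t + leaf_absorbed t \<le> absorbed t"
    and "absorbed t < z_total t \<Longrightarrow> absorbed t = total_input t"
  using allocation_bounds[OF f_nonneg[OF center assms] boost_nonneg[OF assms]
      leaf_input_nonneg[OF assms] z_total_nonneg[OF assms]]
  unfolding leaf_absorbed_def absorbed_def total_input_def by auto

lemma leaf_flow_bounds:
  assumes "i \<in> I" "t \<in> {0..T}"
  shows "0 \<le> leaf_flow i t" "leaf_flow i t \<le> f i t"
proof -
  have "0 \<le> leaf_absorbed t / leaf_input t" "leaf_absorbed t / leaf_input t \<le> 1"
    using allocation(1,2)[OF assms(2)] leaf_input_nonneg[OF assms(2)] by (auto simp: divide_le_eq_1)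
  with f_nonneg[OF assms] show "0 \<le> leaf_flow i t" "leaf_flow i t \<le> f i t"
    unfolding leaf_flow_def by (auto intro: mult_nonneg_nonneg mult_left_le_one_le simp del: times_divide_eq_left)
qed

lemma sum_leaf_flow:
  assumes "t \<in> {0..T}" shows "(\<Sum>i\<in>leaves. leaf_flow i t) = leaf_absorbed t"
proof -
  have "(\<Sum>i\<in>leaves. leaf_flow i t) = leaf_absorbed t / leaf_input t * leaf_input t"
    unfolding leaf_flow_def leaf_input_def by (simp only: sum_distrib_left)
  then show ?thesis using allocation(1,2)[OF assms] by (cases "leaf_input t = 0") auto
qed

lemma z_cut_bounds:
  assumes "j \<in> J" "t \<in> {0..T}"
  shows "0 \<le> z_cut j t" "z_cut j t \<le> z j t"
proof -
  have "0 \<le> absorbed t / z_total t" "absorbed t / z_total t \<le> 1"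
    using allocation(3,4)[OF assms(2)] z_total_nonneg[OF assms(2)] by (auto simp: divide_le_eq_1)
  moreover have "0 \<le> z j t" using z_nonneg assms by blast
  ultimately show "0 \<le> z_cut j t" "z_cut j t \<le> z j t"
    unfolding z_cut_def by (auto intro: mult_nonneg_nonneg mult_right_le_one_le simp del: times_divide_eq_right)
qed

lemma sum_z_cut:
  assumes "t \<in> {0..T}" shows "(\<Sum>j\<in>J. z_cut j t) = absorbed t"
proof -
  have "(\<Sum>j\<in>J. z_cut j t) = z_total t * (absorbed t / z_total t)"
    unfolding z_cut_def z_total_def by (simp only: sum_distrib_right)
  then show ?thesis using allocation(3,4)[OF assms] by (cases "z_total t = 0") auto
qed

lemma inflow_nonneg: "t \<in> {0..T} \<Longrightarrow> 0 \<le> inflow j t"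
  unfolding inflow_def by (rule sum_nonneg) (use leaf_flow_bounds leaves_sub in auto)

lemma sum_inflow: "t \<in> {0..T} \<Longrightarrow> (\<Sum>j\<in>J. inflow j t) = leaf_absorbed t"
  unfolding inflow_def sum_leaf_flow[symmetric]
  by (rule sum.group) (use leaves_split(3) nb_in leaves_sub in auto)

lemma row_sum_dpsi:
  assumes "i \<in> I" "t \<in> {0..T}"
  shows "(\<Sum>j\<in>J. dpsi i j t) = f i t + (if i = i0 then boost t else 0) - dy i t"
proof (cases "i = i0")
  case True
  then show ?thesis
    using sum_z_cut[OF assms(2)] sum_inflow[OF assms(2)] by (simp add: dpsi_def dy_def sum_subtractf)
next
  case False
  then show ?thesis using nb_in[OF assms(1)] by (simp add: dpsi_def dy_def)
qed

lemma col_sum_dpsi: "(\<Sum>i\<in>I. dpsi i j t) = z_cut j t"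
proof -
  have "(\<Sum>i\<in>leaves. dpsi i j t) = (\<Sum>i\<in>leaves. if nb i = j then leaf_flow i t else 0)"
    by (rule sum.cong) (auto simp: dpsi_def leaves_def)
  also have "\<dots> = inflow j t"
    unfolding inflow_def using leaves_split(3) by (simp add: sum.inter_filter)
  finally show ?thesis
    unfolding leaves_split(1) using leaves_split(2,3) by (simp add: dpsi_def)
qed

lemma dpsi_off_E: "i \<in> I \<Longrightarrow> j \<in> J \<Longrightarrow> (i, j) \<notin> E \<Longrightarrow> dpsi i j t = 0"
  using center_adj nb_adj by (auto simp: dpsi_def)

lemma dy_nonneg: "i \<in> I \<Longrightarrow> t \<in> {0..T} \<Longrightarrow> 0 \<le> dy i t"
  using allocation(6) leaf_flow_bounds(2) by (simp add: dy_def)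

lemma sum_dy: "t \<in> {0..T} \<Longrightarrow> (\<Sum>i\<in>I. dy i t) = total_input t - absorbed t"
proof -
  assume t: "t \<in> {0..T}"
  have "(\<Sum>i\<in>leaves. dy i t) = (\<Sum>i\<in>leaves. f i t - leaf_flow i t)"
    by (rule sum.cong) (auto simp: dy_def leaves_def)
  also have "\<dots> = leaf_input t - leaf_absorbed t"
    using sum_leaf_flow[OF t] by (simp add: sum_subtractf leaf_input_def)
  finally show ?thesis
    unfolding leaves_split(1) using leaves_split(2,3) by (simp add: dy_def total_input_def)
qed

lemma eta_rate_leaf:
  assumes "i \<in> leaves"
  shows "eta_rate i s = \<mu> i (nb i) * leaf_flow i s + \<theta> i * (f i s - leaf_flow i s)"
proof -
  have "i \<noteq> i0" "nb i \<in> J" using assms leaves_sub nb_in by auto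
  then show ?thesis
    unfolding eta_rate_def dpsi_def dy_def
    by (simp add: if_distrib[of "\<lambda>v. \<mu> i _ * v"] cong: if_cong)
qed

lemma eta_rate_center:
  "eta_rate i0 s = boost_rate s + (\<Sum>j\<in>J. \<mu> i0 j * z_cut j s) - (\<Sum>j\<in>J. \<mu> i0 j * inflow j s)
    + \<theta> i0 * dy i0 s"
  unfolding eta_rate_def dpsi_def by (simp add: right_diff_distrib sum_subtractf)

lemma rerouting_cost_le:
  assumes s: "s \<in> {0..T}"
  shows "(\<Sum>j\<in>J. \<mu> i0 j * inflow j s) \<le> boost_rate s + (\<Sum>j\<in>J. \<mu> i0 j * z_cut j s)"
proof -
  have cost: "(\<Sum>j\<in>J. \<mu> i0 j * inflow j s) \<le> mu_max * leaf_absorbed s"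
    unfolding sum_inflow[OF s, symmetric]
    by (rule sum_weighted_le) (use inflow_nonneg[OF s] mu_max_ge in auto)
  have gain: "mu_min * absorbed s \<le> (\<Sum>j\<in>J. \<mu> i0 j * z_cut j s)"
    unfolding sum_z_cut[OF s, symmetric]
    by (rule sum_weighted_ge) (use z_cut_bounds(1)[OF _ s] mu_min_le in auto)
  have "0 \<le> mu_min * absorbed s" using mu_min_pos allocation(3)[OF s] by simp
  have "mu_max * leaf_absorbed s \<le> mu_max * fnorm"
    using allocation(2)[OF s] leaf_input_le_fnorm[OF s] mu_min_pos mu_min_le_max
    by (intro mult_left_mono) auto
  show ?thesis
  proof (cases "s \<le> 1 / mu_min")
    case True
    then show ?thesis
      using cost gain \<open>0 \<le> mu_min * absorbed s\<close> \<open>mu_max * leaf_absorbed s \<le> mu_max * fnorm\<close>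
      by (simp add: boost_rate_def)
  next
    case False
    then have "boost_rate s = 0" by (simp add: boost_rate_def)
    show ?thesis
    proof (cases "leaf_absorbed s = 0")
      case True
      then show ?thesis using cost gain \<open>0 \<le> mu_min * absorbed s\<close> \<open>boost_rate s = 0\<close> by simp
    next
      case False
      then have "boost s \<le> absorbed s" using allocation(1,7)[OF s] by fastforce
      moreover have "boost s = mu_max * fnorm / mu_min" using \<open>\<not> s \<le> 1 / mu_min\<close> by (simp add: boost_def)
      ultimately have "mu_max * fnorm \<le> mu_min * absorbed s"
        using mu_min_pos by (simp add: pos_divide_le_eq mult.commute)
      then show ?thesis
        using cost gain \<open>boost_rate s = 0\<close> \<open>mu_max * leaf_absorbed s \<le> mu_max * fnorm\<close> by linarith
    qed
  qed
qed

lemma eta_rate_nonneg: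
  assumes "i \<in> I" "s \<in> {0..T}"
  shows "0 \<le> eta_rate i s"
proof (cases "i = i0")
  case True
  have "0 \<le> \<theta> i0 * dy i0 s" using theta_nonneg[OF center] dy_nonneg[OF center assms(2)] by simp
  then show ?thesis
    unfolding True using eta_rate_center[of s] rerouting_cost_le[OF assms(2)] by linarith
next
  case False
  then have "i \<in> leaves" using assms(1) by (simp add: leaves_def)
  have "0 \<le> \<mu> i (nb i) * leaf_flow i s" "0 \<le> \<theta> i * (f i s - leaf_flow i s)"
    using mu_nonneg theta_nonneg[OF assms(1)] leaf_flow_bounds[OF assms] by simp_all
  then show ?thesis using eta_rate_leaf[OF \<open>i \<in> leaves\<close>] by simp
qed

lemma eta_rate_center_le:
  assumes "s \<in> {0..T}"
  shows "eta_rate i0 s \<le> m5 * fnorm"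
proof -
  have "0 \<le> absorbed s" "absorbed s \<le> total_input s"
    using allocation(3,5)[OF assms] by simp_all
  have "(\<Sum>j\<in>J. \<mu> i0 j * z_cut j s) \<le> mu_max * absorbed s"
    unfolding sum_z_cut[OF assms, symmetric]
    by (rule sum_weighted_le) (use z_cut_bounds(1)[OF _ assms] mu_max_ge in auto)
  moreover have "0 \<le> (\<Sum>j\<in>J. \<mu> i0 j * inflow j s)"
    using inflow_nonneg[OF assms] mu_nonneg by (simp add: sum_nonneg)
  moreover have "boost_rate s \<le> mu_max * fnorm"
    using fnorm_nonneg mu_min_pos mu_min_le_max by (simp add: boost_rate_def)
  moreover have "\<theta> i0 * dy i0 s \<le> \<theta> i0 * total_input s"
    using allocation(2,3)[OF assms] theta_nonneg[OF center]
    by (intro mult_left_mono) (simp_all add: dy_def total_input_def)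
  ultimately have "eta_rate i0 s \<le> mu_max * fnorm + mu_max * absorbed s + \<theta> i0 * total_input s"
    using eta_rate_center[of s] by linarith
  also have "\<dots> \<le> mu_max * fnorm + (mu_max + \<theta> i0) * total_input s"
    using \<open>absorbed s \<le> total_input s\<close> mu_min_pos mu_min_le_max by (simp add: distrib_right)
  also have "\<dots> \<le> rate_total * fnorm + rate_total * (fnorm * (1 + mu_max / mu_min))"
    using mu_max_theta_le_rate_total theta_nonneg[OF center] fnorm_nonneg rate_total_nonneg
      total_input_le[OF assms] \<open>0 \<le> absorbed s\<close> \<open>absorbed s \<le> total_input s\<close>
    by (intro add_mono mult_mono) auto
  also have "\<dots> = m5 * fnorm" by (simp add: m5_def algebra_simps)
  finally show ?thesis .
qed

lemma eta_rate_leaf_le: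
  assumes "i \<in> leaves" "s \<in> {0..T}"
  shows "eta_rate i s \<le> m5 * fnorm"
proof -
  have i: "i \<in> I" using assms(1) leaves_sub by blast
  have "eta_rate i s \<le> \<mu> i (nb i) * f i s + \<theta> i * f i s"
    unfolding eta_rate_leaf[OF assms(1)]
    using leaf_flow_bounds[OF i assms(2)] mu_nonneg theta_nonneg[OF i]
    by (intro add_mono mult_left_mono) auto
  also have "\<dots> = (\<mu> i (nb i) + \<theta> i) * f i s" by (simp add: algebra_simps)
  also have "\<dots> \<le> rate_total * fnorm"
    using mu_theta_le_rate_total[OF i nb_in[OF i]] f_le_fnorm[OF i assms(2)]
      f_nonneg[OF i assms(2)] rate_total_nonneg
    by (intro mult_mono) auto
  also have "\<dots> \<le> m5 * fnorm"
    using rate_total_le_m5 fnorm_nonneg by (rule mult_right_mono)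
  finally show ?thesis .
qed

lemma eta_rate_le: "i \<in> I \<Longrightarrow> s \<in> {0..T} \<Longrightarrow> eta_rate i s \<le> m5 * fnorm"
  using eta_rate_center_le eta_rate_leaf_le by (cases "i = i0") (auto simp: leaves_def)

lemma regular_boost_rate: "regular_on T boost_rate"
proof (rule regular_onI[where M = "\<bar>mu_max * fnorm\<bar>"])
  show "boost_rate \<in> borel_measurable (restrict_space lborel {0..T})"
    unfolding boost_rate_def[abs_def] by (rule measurable_restrict_space1) measurable
qed (simp add: boost_rate_def)

lemma regular_boost: "regular_on T boost"
  unfolding boost_def[abs_def] by (intro regular_on_continuous continuous_intros)

lemma regular_leaf_input: "regular_on T leaf_input"
  unfolding leaf_input_def[abs_def]
  by (rule regular_on_sum) (use leaves_split(3) leaves_sub f_regular in auto)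

lemma regular_z_total: "regular_on T z_total"
  unfolding z_total_def[abs_def] by (rule regular_on_sum) (use z_regular in auto)

lemma regular_absorbed: "regular_on T absorbed"
  unfolding absorbed_def[abs_def] total_input_def
  by (intro regular_on_min regular_on_add regular_z_total f_regular center regular_boost
      regular_leaf_input)

lemma regular_leaf_absorbed: "regular_on T leaf_absorbed"
  unfolding leaf_absorbed_def[abs_def]
  by (intro regular_on_min regular_on_max regular_on_diff regular_on_const regular_leaf_input
      regular_z_total f_regular center regular_boost)

lemma regular_leaf_flow:
  assumes "i \<in> I" shows "regular_on T (leaf_flow i)"
proof (rule regular_on_dominated[OF _ f_regular[OF assms]])
  show "leaf_flow i \<in> borel_measurable (restrict_space lborel {0..T})"
    unfolding leaf_flow_def[abs_def]
    by (intro borel_measurable_times borel_measurable_divide regular_on_measurable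
        regular_leaf_absorbed regular_leaf_input f_regular assms)
  show "\<bar>leaf_flow i t\<bar> \<le> \<bar>f i t\<bar>" if "t \<in> {0..T}" for t
    using leaf_flow_bounds[OF assms that] by simp
qed

lemma regular_z_cut:
  assumes "j \<in> J" shows "regular_on T (z_cut j)"
proof (rule regular_on_dominated[OF _ z_regular[OF assms]])
  show "z_cut j \<in> borel_measurable (restrict_space lborel {0..T})"
    unfolding z_cut_def[abs_def]
    by (intro borel_measurable_times borel_measurable_divide regular_on_measurable
        regular_absorbed regular_z_total z_regular assms)
  show "\<bar>z_cut j t\<bar> \<le> \<bar>z j t\<bar>" if "t \<in> {0..T}" for t
    using z_cut_bounds[OF assms that] by simp
qed

lemma regular_dpsi:
  assumes "i \<in> I" "j \<in> J" shows "regular_on T (dpsi i j)"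
proof -
  have "regular_on T (inflow j)"
    unfolding inflow_def[abs_def]
    by (rule regular_on_sum) (use leaves_split(3) leaves_sub regular_leaf_flow in auto)
  then show ?thesis
    unfolding dpsi_def[abs_def]
    using regular_on_diff[OF regular_z_cut[OF assms(2)]] regular_leaf_flow[OF assms(1)]
    by (cases "i = i0"; cases "j = nb i") simp_all
qed

lemma regular_dy:
  assumes "i \<in> I" shows "regular_on T (dy i)"
  unfolding dy_def[abs_def]
  by (cases "i = i0")
     (auto intro!: regular_on_diff regular_on_add f_regular center assms regular_boost
       regular_leaf_absorbed regular_absorbed regular_leaf_flow)

lemma regular_boost_rate_at: "regular_on T (\<lambda>s. if i = i0 then boost_rate s else 0)"
  by (cases "i = i0") (simp_all add: regular_boost_rate)

lemma regular_eta_rate: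
  assumes "i \<in> I" shows "regular_on T (eta_rate i)"
  unfolding eta_rate_def[abs_def]
  by (intro regular_on_add regular_on_sum regular_on_cmult regular_dpsi regular_dy
      regular_boost_rate_at assms) auto

lemma Jint_boost_rate: "t \<in> {0..T} \<Longrightarrow> Jint boost_rate t = boost t"
  unfolding boost_rate_def[abs_def] boost_def using mu_min_pos by (simp add: Jint_step)

lemma complementarity:
  assumes t: "t \<in> {0..T}"
  shows "min (\<Sum>i\<in>I. y i t + dy i t) (\<Sum>j\<in>J. z j t - z_cut j t) = 0"
proof -
  have sum_y: "(\<Sum>i\<in>I. y i t + dy i t) = (\<Sum>i\<in>I. y i t) + (total_input t - absorbed t)"
    using sum_dy[OF t] by (simp add: sum.distrib)
  have sum_z: "(\<Sum>j\<in>J. z j t - z_cut j t) = z_total t - absorbed t"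
    using sum_z_cut[OF t] by (simp add: sum_subtractf z_total_def)
  have old: "min (\<Sum>i\<in>I. y i t) (z_total t) = 0" "0 \<le> (\<Sum>i\<in>I. y i t)"
    using adm t by (auto simp: admissible_def z_total_def intro: sum_nonneg)
  show ?thesis
  proof (cases "absorbed t < z_total t")
    case True
    then show ?thesis
      using allocation(3,8)[OF t] old sum_y sum_z by (auto simp: min_def split: if_splits)
  next
    case False
    then show ?thesis using allocation(4,5)[OF t] old(2) sum_y sum_z by simp
  qed
qed

lemma perturbed_admissible:
  "admissible nI nJ E \<mu> \<theta> T (\<lambda>i j t. \<psi> i j t + dpsi i j t) (\<lambda>i t. y i t + dy i t)
     (\<lambda>j t. z j t - z_cut j t) (\<lambda>i t. w i t + f i t + Jint (eta_rate i) t)"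
proof (rule admissible_perturbation[OF adm regular_dpsi regular_dy regular_z_cut f_regular
      regular_boost_rate_at eta_rate_def])
  show "dpsi i j t = 0" if "t \<in> {0..T}" "i \<in> I" "j \<in> J" "(i, j) \<notin> E" for t i j
    using dpsi_off_E that by blast
  show "(\<Sum>j\<in>J. dpsi i j t) = f i t + Jint (\<lambda>s. if i = i0 then boost_rate s else 0) t - dy i t"
    if "t \<in> {0..T}" "i \<in> I" for t i
    using row_sum_dpsi[OF that(2,1)] Jint_boost_rate[OF that(1)] by (simp add: Jint_def)
  show "(\<Sum>i\<in>I. dpsi i j t) = z_cut j t" for t j
    by (rule col_sum_dpsi)
  show "0 \<le> y i t + dy i t" if "t \<in> {0..T}" "i \<in> I" for t i
    using adm that dy_nonneg[OF that(2,1)] by (auto simp: admissible_def)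
  show "0 \<le> z j t - z_cut j t" if "t \<in> {0..T}" "j \<in> J" for t j
    using z_cut_bounds(2)[OF that(2,1)] by simp
  show "min (\<Sum>i\<in>I. y i t + dy i t) (\<Sum>j\<in>J. z j t - z_cut j t) = 0" if "t \<in> {0..T}" for t
    by (rule complementarity[OF that])
qed

end

lemma (in star_network) perturbed_solution_exists:
  assumes "0 < T" "admissible nI nJ E \<mu> \<theta> T \<psi> y z w"
    and "\<forall>i\<in>I. regular_on T (f i) \<and> (\<forall>t\<in>{0..T}. 0 \<le> f i t)"
  shows "\<exists>\<psi>' y' z' w' \<eta>.
     admissible nI nJ E \<mu> \<theta> T \<psi>' y' z' w' \<and>
     (\<forall>t\<in>{0..T}. (\<Sum>i\<in>I. y' i t) \<ge> (\<Sum>i\<in>I. y i t)) \<and>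
     (\<forall>t\<in>{0..T}. (\<Sum>j\<in>J. z' j t) \<le> (\<Sum>j\<in>J. z j t)) \<and>
     (\<forall>i\<in>I. \<forall>t\<in>{0..T}. w' i t = w i t + f i t + \<eta> i t) \<and>
     (\<forall>i\<in>I. mono_on {0..T} (\<eta> i) \<and> continuous_on {0..T} (\<eta> i) \<and>
        (\<forall>t\<in>{0..T}. 0 \<le> \<eta> i t \<and> \<eta> i t \<le> m5 * T * (\<Sum>i'\<in>I. sup_norm T (f i'))))"
proof -
  interpret star_network_input nI nJ E \<mu> \<theta> i0 nb T \<psi> y z w f
    using assms by unfold_locales auto
  show ?thesis
  proof (intro exI conjI)
    show "admissible nI nJ E \<mu> \<theta> T (\<lambda>i j t. \<psi> i j t + dpsi i j t) (\<lambda>i t. y i t + dy i t)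
       (\<lambda>j t. z j t - z_cut j t) (\<lambda>i t. w i t + f i t + Jint (eta_rate i) t)"
      by (rule perturbed_admissible)
    show "\<forall>t\<in>{0..T}. (\<Sum>i\<in>I. y i t + dy i t) \<ge> (\<Sum>i\<in>I. y i t)"
      using sum_dy allocation(5) by (simp add: sum.distrib)
    show "\<forall>t\<in>{0..T}. (\<Sum>j\<in>J. z j t - z_cut j t) \<le> (\<Sum>j\<in>J. z j t)"
      using sum_z_cut allocation(3) by (simp add: sum_subtractf)
    show "\<forall>i\<in>I. \<forall>t\<in>{0..T}. w i t + f i t + Jint (eta_rate i) t = w i t + f i t + Jint (eta_rate i) t"
      by simp
    have "0 \<le> m5 * fnorm"
      using rate_total_le_m5 rate_total_nonneg fnorm_nonneg by simp
    then have "Jint (eta_rate i) t \<le> m5 * T * (\<Sum>i'\<in>I. sup_norm T (f i'))"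
      if "i \<in> I" "t \<in> {0..T}" for i t
      using Jint_le[OF regular_eta_rate[OF that(1)] that(2) eta_rate_le[OF that(1)]]
      by (simp add: fnorm_def mult_ac)
    then show "\<forall>i\<in>I. mono_on {0..T} (Jint (eta_rate i)) \<and> continuous_on {0..T} (Jint (eta_rate i)) \<and>
        (\<forall>t\<in>{0..T}. 0 \<le> Jint (eta_rate i) t \<and>
           Jint (eta_rate i) t \<le> m5 * T * (\<Sum>i'\<in>I. sup_norm T (f i')))"
      by (auto intro!: Jint_mono_on Jint_continuous_on Jint_nonneg regular_eta_rate eta_rate_nonneg)
  qed
qed

theorem lemma2:
  fixes nI nJ :: nat and E :: "(nat \<times> nat) set"
    and \<mu> :: "nat \<Rightarrow> nat \<Rightarrow> real" and \<theta> :: "nat \<Rightarrow> real"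
  assumes E_sub: "E \<subseteq> Iset nI \<times> Jset nI nJ"
    and mu_pos: "\<And>i j. (i, j) \<in> E \<Longrightarrow> \<mu> i j > 0"
    and mu_zero: "\<And>i j. (i, j) \<notin> E \<Longrightarrow> \<mu> i j = 0"
    and theta_nn: "\<And>i. i \<in> Iset nI \<Longrightarrow> \<theta> i \<ge> 0"
    and tree: "is_tree (Iset nI \<union> Jset nI nJ) E"
    and diam: "diameter (Iset nI \<union> Jset nI nJ) E = 3"
  shows "\<exists>m5::real. \<forall>T::real. \<forall>\<psi> y z w (f :: nat \<Rightarrow> real \<Rightarrow> real).
     T > 0 \<longrightarrow> admissible nI nJ E \<mu> \<theta> T \<psi> y z w \<longrightarrow>
     (\<forall>i\<in>Iset nI. regular_on T (f i) \<and> (\<forall>t\<in>{0..T}. 0 \<le> f i t)) \<longrightarrow>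
     (\<exists>\<psi>' y' z' w' \<eta>.
        admissible nI nJ E \<mu> \<theta> T \<psi>' y' z' w' \<and>
        (\<forall>t\<in>{0..T}. (\<Sum>i\<in>Iset nI. y' i t) \<ge> (\<Sum>i\<in>Iset nI. y i t)) \<and>
        (\<forall>t\<in>{0..T}. (\<Sum>j\<in>Jset nI nJ. z' j t) \<le> (\<Sum>j\<in>Jset nI nJ. z j t)) \<and>
        (\<forall>i\<in>Iset nI. \<forall>t\<in>{0..T}. w' i t = w i t + f i t + \<eta> i t) \<and>
        (\<forall>i\<in>Iset nI. mono_on {0..T} (\<eta> i) \<and> continuous_on {0..T} (\<eta> i) \<and>
           (\<forall>t\<in>{0..T}. 0 \<le> \<eta> i t \<and>
              \<eta> i t \<le> m5 * T * (\<Sum>i'\<in>Iset nI. sup_norm T (f i')))))"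
proof -
  have disj: "Iset nI \<inter> Jset nI nJ = {}" by auto
  obtain i0 where i0: "i0 \<in> Iset nI" "Jset nI nJ \<noteq> {}" "\<And>j. j \<in> Jset nI nJ \<Longrightarrow> (i0, j) \<in> E"
    using diameter_3_tree_dominating_vertex[OF E_sub disj tree diam] by blast
  have "\<exists>j. j \<in> Jset nI nJ \<and> (i, j) \<in> E" if "i \<in> Iset nI" for i
    using tree i0(2) connected_bipartite_neighbour[OF E_sub disj _ that]
    unfolding is_tree_def by blast
  then obtain nb where "\<And>i. i \<in> Iset nI \<Longrightarrow> nb i \<in> Jset nI nJ \<and> (i, nb i) \<in> E" by metis
  then interpret star_network nI nJ E \<mu> \<theta> i0 nb
    using E_sub mu_pos mu_zero theta_nn i0 by unfold_locales auto
  show ?thesis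
    by (intro exI[of _ m5] allI impI perturbed_solution_exists)
qed

end
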